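(* Let $\mathbf{B}$ be a binomial ring, $n\ge0$, and $X$ a finite set. In the category $\mathbb{Q}\otimes_{\mathbb Z}\mathfrak{Laby}^n$, $$I_X=\sum_{S}\frac{1}{\deg S}\,S,$$ where $S$ ranges over the pure mazes $X\to X$ consisting, for each $x\in X$, of $d_x\ge1$ passages $x\xrightarrow1x$, with $\sum_xd_x=n$, and $\deg S=\prod_xd_x!$.
   Context: Binomial ring: commutative unital, torsion-free, $\binom ak\in\mathbf{B}$ for $a\in\mathbf{B}$, $k\ge0$. A passage $p\colon x\to y$ carries label $\overline p\in\mathbf{B}$; a maze $P\colon X\to Y$ between finite sets is a finite multi-set of passages with every element of $X$ a source and of $Y$ a target; $I_X=\{x\xrightarrow1x:x\in X\}$. $\mathfrak{Laby}$: objects formal finite direct sums of finite sets; morphisms generated by mazes modulo $P\cup\{x\xrightarrow0y\}=0$ and $P\cup\{x\xrightarrow{a+b}y\}=P\cup\{x\xrightarrow ay\}+P\cup\{x\xrightarrow by\}+P\cup\{x\xrightarrow ay,x\xrightarrow by\}$; composition $P\circ Q=\sum_{U\sqsubseteq P\boxtimes Q}U$ ($U$ a sub-multi-set of composable pairs using every passage occurrence of $P$ and $Q$, read as maze with passages $x\xrightarrow{\overline p\overline q}z$). $\mathfrak{Laby}_n$: quotient by $P=0$ if $|P|>n$ and $P=\sum_d\prod_p\binom{\overline p}{d_p}I_d$ ($d_p\ge1$ on passage occurrences $p$; $I_d$ has $d_p$ label-$1$ passages from source to target of $p$). $a\boxdot P$: all labels multiplied by $a\in\mathbb{Q}\otimes\mathbf{B}$.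 $\mathfrak{Laby}^n$: image of $\mathfrak{Laby}_n$ in $\mathbb{Q}\otimes_{\mathbb Z}\mathfrak{Laby}_n$ modulo the ideal generated by all $a^nP-a\boxdot P$, $a\in\mathbb{Q}\otimes\mathbf{B}$. *)

theory Defs
  imports "HOL-Library.Multiset"
begin

text \<open>Hom-spaces of the (Q-tensored) labyrinth category over the
label ring K = Q (x) B are modelled as K-valued finitely supported functions on mazes.\<close>

type_synonym ('a,'k) passage = "'a \<times> 'a \<times> 'k"
type_synonym ('a,'k) maze = "('a,'k) passage multiset"
type_synonym ('a,'k) comb = "('a,'k) maze \<Rightarrow> 'k"

definition psrc :: "('a,'k) passage \<Rightarrow> 'a" where "psrc p = fst p"
definition ptgt :: "('a,'k) passage \<Rightarrow> 'a" where "ptgt p = fst (snd p)"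
definition plab :: "('a,'k) passage \<Rightarrow> 'k" where "plab p = snd (snd p)"

definition is_maze :: "'a set \<Rightarrow> 'a set \<Rightarrow> ('a,'k) maze \<Rightarrow> bool" where
  "is_maze X Y P \<longleftrightarrow>
     (\<forall>p\<in>#P. psrc p \<in> X \<and> ptgt p \<in> Y) \<and>
     (\<forall>x\<in>X. \<exists>p\<in>#P. psrc p = x) \<and> (\<forall>y\<in>Y. \<exists>p\<in>#P. ptgt p = y)"

definition sgl :: "('a,'k) maze \<Rightarrow> ('a,'k::zero_neq_one) comb" where
  "sgl P = (\<lambda>R. if R = P then 1 else 0)"

definition natinv :: "nat \<Rightarrow> 'k::comm_ring_1" where
  "natinv m = (THE y. of_nat m * y = 1)"

definition binomK :: "'k::comm_ring_1 \<Rightarrow> nat \<Rightarrow> 'k" where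
  "binomK a k = (\<Prod>i<k. a - of_nat i) * natinv (fact k)"

text \<open>P o Q for Q : X -> Y and P : Y -> Z: sum over all sets U of composable pairs of
passage occurrences (p of P, q of Q, target q = source p) such that every occurrence of
P and of Q is used; U is read as the maze with passages x -> z labelled (label p)(label q).
Occurrences are enumerated through an arbitrary list representation of the multisets
(the result does not depend on the choice).\<close>

definition maze_comp :: "('a,'k::comm_ring_1) maze \<Rightarrow> ('a,'k) maze \<Rightarrow> ('a,'k) comb" where
  "maze_comp P Q = (let ps = (SOME xs. mset xs = P); qs = (SOME xs. mset xs = Q);
     C = {(i,j). i < length ps \<and> j < length qs \<and> psrc (ps!i) = ptgt (qs!j)};
     Us = {U. U \<subseteq> C \<and> fst ` U = {..<length ps} \<and> snd ` U = {..<length qs}};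
     res = (\<lambda>U. image_mset (\<lambda>(i,j). (psrc (qs!j), ptgt (ps!i), plab (ps!i) * plab (qs!j)))
                   (mset_set U))
   in (\<lambda>R. of_nat (card {U \<in> Us. res U = R})))"

definition comp :: "('a,'k::comm_ring_1) comb \<Rightarrow> ('a,'k) comb \<Rightarrow> ('a,'k) comb" where
  "comp f g = (\<lambda>R. \<Sum>P\<in>{P. f P \<noteq> 0}. \<Sum>Q\<in>{Q. g Q \<noteq> 0}. f P * g Q * maze_comp P Q R)"

text \<open>Right-hand side of the Laby_n relation P = sum_d prod_p binom(label p, d_p) I_d;
terms with sum d_p > n are omitted since those I_d are already zero in Laby_n.\<close>

definition expand :: "nat \<Rightarrow> ('a,'k::comm_ring_1) maze \<Rightarrow> ('a,'k) comb" where
  "expand n P = (let ps = (SOME xs. mset xs = P);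
     D = {d::nat list. length d = length ps \<and> (\<forall>i<length ps. 1 \<le> d!i) \<and> sum_list d \<le> n};
     Id = (\<lambda>d. \<Sum>i<length ps. replicate_mset (d!i) (psrc (ps!i), ptgt (ps!i), 1));
     cf = (\<lambda>d. \<Prod>i<length ps. binomK (plab (ps!i)) (d!i))
   in (\<lambda>R. \<Sum>d\<in>D. if Id d = R then cf d else 0))"

definition lscale :: "'k::times \<Rightarrow> ('a,'k) maze \<Rightarrow> ('a,'k) maze" where
  "lscale a P = image_mset (\<lambda>(x,y,l). (x,y,a*l)) P"

definition gen_rel :: "nat \<Rightarrow> 'a set \<Rightarrow> 'a set \<Rightarrow> ('a,'k::comm_ring_1) comb \<Rightarrow> bool" where
  "gen_rel n X Y f \<longleftrightarrow>
     (\<exists>P x y. is_maze X Y (add_mset (x,y,0) P) \<and> f = sgl (add_mset (x,y,0) P))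
   \<or> (\<exists>P x y a b. is_maze X Y (add_mset (x,y,a+b) P) \<and>
        f = (\<lambda>R. sgl (add_mset (x,y,a+b) P) R - sgl (add_mset (x,y,a) P) R
                 - sgl (add_mset (x,y,b) P) R - sgl (add_mset (x,y,a) (add_mset (x,y,b) P)) R))
   \<or> (\<exists>P. is_maze X Y P \<and> n < size P \<and> f = sgl P)
   \<or> (\<exists>P. is_maze X Y P \<and> f = (\<lambda>R. sgl P R - expand n P R))
   \<or> (\<exists>a P. is_maze X Y P \<and> f = (\<lambda>R. a ^ n * sgl P R - sgl (lscale a P) R))"

text \<open>The two-sided ideal (family of K-submodules of the hom-spaces between finite sets,
closed under composition with arbitrary morphisms) generated by the relations.\<close>

inductive in_ideal :: "nat \<Rightarrow> 'a set \<Rightarrow> 'a set \<Rightarrow> ('a,'k::comm_ring_1) comb \<Rightarrow> bool"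
  for n :: nat where
  gen: "finite X \<Longrightarrow> finite Y \<Longrightarrow> gen_rel n X Y f \<Longrightarrow> in_ideal n X Y f"
| zero: "in_ideal n X Y (\<lambda>_. 0)"
| add: "in_ideal n X Y f \<Longrightarrow> in_ideal n X Y g \<Longrightarrow> in_ideal n X Y (\<lambda>R. f R + g R)"
| smul: "in_ideal n X Y f \<Longrightarrow> in_ideal n X Y (\<lambda>R. c * f R)"
| compose: "in_ideal n U V f \<Longrightarrow> finite X \<Longrightarrow> finite Y \<Longrightarrow> is_maze V Y P \<Longrightarrow> is_maze X U Q
      \<Longrightarrow> in_ideal n X Y (comp (sgl P) (comp f (sgl Q)))"

definition identity_maze :: "'a set \<Rightarrow> ('a,'k::one) maze" where
  "identity_maze X = mset_set ((\<lambda>x. (x, x, 1)) ` X)"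

definition pure_degs :: "nat \<Rightarrow> 'a set \<Rightarrow> ('a \<Rightarrow> nat) set" where
  "pure_degs n X = {d. (\<forall>x\<in>X. 1 \<le> d x) \<and> (\<forall>x. x \<notin> X \<longrightarrow> d x = 0) \<and> (\<Sum>x\<in>X. d x) = n}"

definition pure_maze :: "'a set \<Rightarrow> ('a \<Rightarrow> nat) \<Rightarrow> ('a,'k::one) maze" where
  "pure_maze X d = (\<Sum>x\<in>X. replicate_mset (d x) (x, x, 1))"

end

theory Submission
  imports Defs "HOL-Computational_Algebra.Polynomial" "HOL-Library.Function_Algebras"
begin

text \<open>For every scalar a the relations of the category give
  a^n I_X = a \<boxdot> I_X = \<Sum>_d (\<Prod>_x binom(a, d_x)) I_d, the sum running over pure degrees with
  total at most n.  Put a = j for j = 0, ..., n and take the n-th forward difference in j.  On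
  the left, \<Delta>^n j^n = n!.  On the right, \<Prod>_x binom(j, d_x) is a polynomial in j of degree
  \<Sum>_x d_x \<le> n with leading coefficient 1 / \<Prod>_x d_x!, so its n-th difference is n! / \<Prod>_x d_x!
  when \<Sum>_x d_x = n and 0 otherwise.  Dividing by n! gives the identity.\<close>

lemma natinv_unique:
  assumes "of_nat m * y = (1::'k::comm_ring_1)"
  shows "natinv m = y"
  unfolding natinv_def
proof (rule the_equality)
  fix z assume z: "of_nat m * z = (1::'k)"
  have "z = z * (of_nat m * y)" using assms by simp
  also have "\<dots> = (of_nat m * z) * y" by (simp add: algebra_simps)
  finally show "z = y" using z by simp
qed (fact assms)

lemma of_nat_mult_natinv:
  assumes "\<exists>y::'k::comm_ring_1. of_nat m * y = 1"
  shows "of_nat m * (natinv m :: 'k) = 1"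
  using assms natinv_unique by metis

lemma natinv_cancel_left:
  assumes "\<exists>y::'k::comm_ring_1. of_nat m * y = 1"
  shows "natinv m * (of_nat m * z) = (z::'k)"
proof -
  have "natinv m * (of_nat m * z) = (of_nat m * natinv m) * z"
    by (simp only: mult.assoc mult.left_commute[of "natinv m"])
  then show ?thesis by (simp add: of_nat_mult_natinv[OF assms])
qed

lemma natinv_prod:
  assumes "\<And>x. x \<in> A \<Longrightarrow> \<exists>y::'k::comm_ring_1. of_nat (f x) * y = 1"
  shows "(natinv (\<Prod>x\<in>A. f x) :: 'k) = (\<Prod>x\<in>A. natinv (f x))"
proof (rule natinv_unique)
  have "of_nat (\<Prod>x\<in>A. f x) * (\<Prod>x\<in>A. natinv (f x) :: 'k) = (\<Prod>x\<in>A. of_nat (f x) * natinv (f x))"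
    by (simp add: prod.distrib)
  also have "\<dots> = 1" using assms by (auto intro!: prod.neutral of_nat_mult_natinv)
  finally show "of_nat (\<Prod>x\<in>A. f x) * (\<Prod>x\<in>A. natinv (f x) :: 'k) = 1" .
qed

text \<open>\<open>fwd_diff n f\<close> is (\<Delta>^n f)(0).\<close>

fun fwd_diff :: "nat \<Rightarrow> (nat \<Rightarrow> 'a::ab_group_add) \<Rightarrow> 'a" where
  "fwd_diff 0 f = f 0"
| "fwd_diff (Suc n) f = fwd_diff n (\<lambda>j. f (Suc j) - f j)"

lemma fwd_diff_diff: "fwd_diff n (\<lambda>j. f j - g j) = fwd_diff n f - fwd_diff n g"
proof (induction n arbitrary: f g)
  case (Suc n)
  have "(\<lambda>j. (f (Suc j) - g (Suc j)) - (f j - g j)) = (\<lambda>j. (f (Suc j) - f j) - (g (Suc j) - g j))"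
    by (simp add: fun_eq_iff algebra_simps)
  then show ?case by (simp add: Suc.IH)
qed simp

lemma fwd_diff_sum: "fwd_diff n (\<lambda>j. \<Sum>i\<in>I. f i j) = (\<Sum>i\<in>I. fwd_diff n (f i))"
  by (induction n arbitrary: f) (simp_all add: sum_subtractf[symmetric])

lemma fwd_diff_mult_right: "fwd_diff n (\<lambda>j. f j * c) = fwd_diff n f * (c::'a::ring)"
  by (induction n arbitrary: f) (simp_all add: left_diff_distrib[symmetric])

lemma fwd_diff_of_int: "fwd_diff n (\<lambda>j. of_int (f j)) = (of_int (fwd_diff n f) :: 'a::ring_1)"
  by (induction n arbitrary: f) (simp_all flip: of_int_diff)

lemma fwd_diff_apply: "fwd_diff n f x = fwd_diff n (\<lambda>j. f j x)"
proof (induction n arbitrary: f)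
  case (Suc n)
  have "fwd_diff (Suc n) f x = fwd_diff n (\<lambda>j. f (Suc j) - f j) x" by simp
  also have "\<dots> = fwd_diff n (\<lambda>j. (f (Suc j) - f j) x)" by (rule Suc.IH)
  finally show ?case by simp
qed simp

lemma shift_diff_degree_coeff:
  fixes p :: "'a::idom poly"
  assumes "degree p \<le> Suc n"
  shows "degree (p \<circ>\<^sub>p [:1, 1:] - p) \<le> n \<and> coeff (p \<circ>\<^sub>p [:1, 1:] - p) n = of_nat (Suc n) * coeff p (Suc n)"
  using assms
proof (induction n arbitrary: p)
  case 0
  obtain a q where p: "p = pCons a q" by (cases p) auto
  have "degree q = 0" using 0 p by (cases "q = 0") auto
  then obtain c where "q = [:c:]" by (metis degree_eq_zeroE)
  then show ?case using p by (simp add: pcompose_pCons)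
next
  case (Suc m)
  obtain a q where p: "p = pCons a q" by (cases p) auto
  have dq: "degree q \<le> Suc m" using Suc.prems p by (cases "q = 0") auto
  note IH = Suc.IH[OF dq]
  have shift: "p \<circ>\<^sub>p [:1, 1:] - p = pCons 0 (q \<circ>\<^sub>p [:1, 1:] - q) + q \<circ>\<^sub>p [:1, 1:]"
    unfolding p by (simp add: pcompose_pCons algebra_simps)
  have deg_shift: "degree (q \<circ>\<^sub>p [:1, 1:]) = degree q" by (simp add: degree_pcompose)
  have coeff_shift: "coeff (q \<circ>\<^sub>p [:1, 1:]) (Suc m) = coeff q (Suc m)"
  proof (cases "degree q = Suc m")
    case True
    then show ?thesis using lead_coeff_comp[of "[:1, 1:]" q] deg_shift by simp
  next
    case False
    then show ?thesis using dq deg_shift by (simp add: coeff_eq_0)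
  qed
  have "degree (pCons 0 (q \<circ>\<^sub>p [:1, 1:] - q)) \<le> Suc m"
    using IH by (metis Suc_le_mono degree_pCons_le le_trans)
  then have "degree (p \<circ>\<^sub>p [:1, 1:] - p) \<le> Suc m"
    unfolding shift using dq deg_shift by (metis degree_add_le)
  moreover have "coeff (p \<circ>\<^sub>p [:1, 1:] - p) (Suc m) = of_nat (Suc (Suc m)) * coeff p (Suc (Suc m))"
    unfolding shift using IH coeff_shift p by (simp add: algebra_simps)
  ultimately show ?case by simp
qed

lemma fwd_diff_poly:
  fixes p :: "'a::idom poly"
  assumes "degree p \<le> n"
  shows "fwd_diff n (\<lambda>j. poly p (of_nat j)) = of_nat (fact n) * coeff p n"
  using assms
proof (induction n arbitrary: p)
  case 0
  then show ?case by (simp add: poly_0_coeff_0)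
next
  case (Suc n)
  let ?q = "p \<circ>\<^sub>p [:1, 1:] - p"
  have "fwd_diff (Suc n) (\<lambda>j. poly p (of_nat j)) = fwd_diff n (\<lambda>j. poly ?q (of_nat j))"
    by (simp add: poly_pcompose algebra_simps)
  also have "\<dots> = of_nat (fact n) * coeff ?q n"
    using Suc shift_diff_degree_coeff by blast
  also have "\<dots> = of_nat (fact (Suc n)) * coeff p (Suc n)"
    using shift_diff_degree_coeff[OF Suc.prems] by (simp add: algebra_simps)
  finally show ?case .
qed


lemma of_int_fact_int: "of_int (fact n :: int) = (of_nat (fact n) :: 'a::ring_1)"
  by (metis of_int_of_nat_eq of_nat_fact)

definition falling_poly :: "nat \<Rightarrow> int poly" where
  "falling_poly k = (\<Prod>i<k. [:- int i, 1:])"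

lemma degree_falling_poly: "degree (falling_poly k) = k"
  unfolding falling_poly_def by (subst degree_prod_eq_sum_degree) auto

lemma lead_coeff_falling_poly: "lead_coeff (falling_poly k) = 1"
  unfolding falling_poly_def lead_coeff_prod by simp

lemma degree_prod_falling_poly:
  assumes "finite X"
  shows "degree (\<Prod>x\<in>X. falling_poly (d x)) = (\<Sum>x\<in>X. d x)"
proof -
  have "falling_poly k \<noteq> 0" for k
    using lead_coeff_falling_poly[of k] by auto
  then show ?thesis
    by (subst degree_prod_eq_sum_degree) (auto simp: degree_falling_poly)
qed

lemma prod_binomK_of_nat:
  "(\<Prod>x\<in>X. binomK (of_nat j :: 'k::comm_ring_1) (d x))
     = of_int (poly (\<Prod>x\<in>X. falling_poly (d x)) (of_nat j)) * (\<Prod>x\<in>X. natinv (fact (d x)))"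
  by (simp add: binomK_def falling_poly_def poly_prod of_int_prod prod.distrib)

lemma fwd_diff_prod_binomK:
  assumes qalg: "\<forall>m::nat. 0 < m \<longrightarrow> (\<exists>y::'k::comm_ring_1. of_nat m * y = 1)"
    and fin: "finite X" and le: "(\<Sum>x\<in>X. d x) \<le> n"
  shows "fwd_diff n (\<lambda>j. \<Prod>x\<in>X. binomK (of_nat j :: 'k) (d x))
    = of_nat (fact n) * (if (\<Sum>x\<in>X. d x) = n then natinv (\<Prod>x\<in>X. fact (d x)) else 0)"
proof -
  let ?Q = "\<Prod>x\<in>X. falling_poly (d x)"
  have deg: "degree ?Q \<le> n" using le by (simp add: degree_prod_falling_poly[OF fin])
  have "lead_coeff ?Q = 1" by (simp add: lead_coeff_prod lead_coeff_falling_poly)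
  then have lead: "coeff ?Q n = (if (\<Sum>x\<in>X. d x) = n then 1 else 0)"
    using le by (auto simp: degree_prod_falling_poly[OF fin] coeff_eq_0)
  have "fwd_diff n (\<lambda>j. \<Prod>x\<in>X. binomK (of_nat j :: 'k) (d x))
      = of_int (fwd_diff n (\<lambda>j. poly ?Q (of_nat j))) * (\<Prod>x\<in>X. natinv (fact (d x)))"
    by (simp add: prod_binomK_of_nat fwd_diff_mult_right fwd_diff_of_int)
  also have "\<dots> = of_nat (fact n) * of_int (coeff ?Q n) * (\<Prod>x\<in>X. natinv (fact (d x)))"
    by (simp add: fwd_diff_poly[OF deg] of_int_fact_int)
  also have "(\<Prod>x\<in>X. natinv (fact (d x))) = (natinv (\<Prod>x\<in>X. fact (d x)) :: 'k)"
    using qalg by (intro natinv_prod[symmetric]) simp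
  finally show ?thesis by (simp add: lead)
qed

lemma fwd_diff_power: "fwd_diff n (\<lambda>j. of_nat j ^ n) = (of_nat (fact n) :: 'k::comm_ring_1)"
proof -
  have "fwd_diff n (\<lambda>j. of_nat j ^ n) = (of_int (fwd_diff n (\<lambda>j. poly (monom 1 n) (of_nat j))) :: 'k)"
    by (simp add: fwd_diff_of_int[symmetric] poly_monom)
  then show ?thesis by (simp add: fwd_diff_poly degree_monom_le of_int_fact_int)
qed

lemma in_ideal_diff:
  assumes "in_ideal n X Y f" "in_ideal n X Y g"
  shows "in_ideal n X Y (f - g)"
  using in_ideal.add[OF assms(1) in_ideal.smul[OF assms(2), of "- 1"]]
  by (simp add: fun_diff_def)

lemma in_ideal_fwd_diff:
  assumes "\<And>j. in_ideal n X Y (g j)"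
  shows "in_ideal n X Y (fwd_diff m g)"
  using assms by (induction m arbitrary: g) (simp_all add: in_ideal_diff)

lemma lscale_identity_maze:
  "finite X \<Longrightarrow> lscale (a::'k::monoid_mult) (identity_maze X) = mset_set ((\<lambda>x. (x, x, a)) ` X)"
  unfolding lscale_def identity_maze_def
  by (subst image_mset_mset_set) (auto simp: inj_on_def image_image image_iff)

lemma is_maze_diagonal: "finite X \<Longrightarrow> is_maze X X (mset_set ((\<lambda>x. (x, x, a)) ` X))"
  unfolding is_maze_def psrc_def ptgt_def by auto

lemma in_ideal_scaled_identity:
  fixes a :: "'k::comm_ring_1"
  assumes "finite X"
  shows "in_ideal n X X (\<lambda>R. a ^ n * sgl (identity_maze X) R - expand n (lscale a (identity_maze X)) R)"
proof -
  let ?I = "identity_maze X :: ('a,'k) maze"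
  let ?L = "lscale a ?I"
  have "is_maze X X ?I" using is_maze_diagonal[OF assms, of 1] by (simp add: identity_maze_def)
  then have "in_ideal n X X (\<lambda>R. a ^ n * sgl ?I R - sgl ?L R)"
    using assms by (intro in_ideal.gen) (auto simp: gen_rel_def)
  moreover have "is_maze X X ?L"
    using is_maze_diagonal[OF assms, of a] by (simp add: lscale_identity_maze[OF assms])
  then have "in_ideal n X X (\<lambda>R. sgl ?L R - expand n ?L R)"
    using assms by (intro in_ideal.gen) (auto simp: gen_rel_def)
  ultimately show ?thesis using in_ideal.add by fastforce
qed

definition pure_degs_le :: "nat \<Rightarrow> 'a set \<Rightarrow> ('a \<Rightarrow> nat) set" where
  "pure_degs_le n X = {d. (\<forall>x\<in>X. 1 \<le> d x) \<and> (\<forall>x. x \<notin> X \<longrightarrow> d x = 0) \<and> (\<Sum>x\<in>X. d x) \<le> n}"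

lemma finite_pure_degs_le:
  assumes "finite X"
  shows "finite (pure_degs_le n X)"
proof -
  have "pure_degs_le n X \<subseteq> {f. \<forall>x. (x \<in> X \<longrightarrow> f x \<in> {..n}) \<and> (x \<notin> X \<longrightarrow> f x = 0)}"
  proof
    fix d assume d: "d \<in> pure_degs_le n X"
    then have "d x \<le> n" if "x \<in> X" for x
      using member_le_sum[OF that _ assms, of d] by (simp add: pure_degs_le_def)
    then show "d \<in> {f. \<forall>x. (x \<in> X \<longrightarrow> f x \<in> {..n}) \<and> (x \<notin> X \<longrightarrow> f x = 0)}"
      using d by (simp add: pure_degs_le_def)
  qed
  then show ?thesis
    using finite_set_of_finite_funs[OF assms finite_atMost, of n 0] by (rule finite_subset)
qed

lemma pure_degs_eq_filter: "pure_degs n X = {d \<in> pure_degs_le n X. (\<Sum>x\<in>X. d x) = n}"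
  unfolding pure_degs_le_def pure_degs_def by auto

lemma sum_degree_lists_eq_sum_pure_degs:
  fixes a :: "'k::comm_ring_1"
  assumes ps: "ps = map (\<lambda>x. (x, x, a)) xs" and dist: "distinct xs"
  shows "(\<Sum>dl\<in>{dl. length dl = length ps \<and> (\<forall>i<length ps. 1 \<le> dl!i) \<and> sum_list dl \<le> n}.
            if (\<Sum>i<length ps. replicate_mset (dl!i) (psrc (ps!i), ptgt (ps!i), 1)) = R
            then (\<Prod>i<length ps. binomK (plab (ps!i)) (dl!i)) else 0)
       = (\<Sum>d\<in>pure_degs_le n (set xs). (\<Prod>x\<in>set xs. binomK a (d x)) * sgl (pure_maze (set xs) d) R)"
    (is "(\<Sum>dl\<in>?Lists. _) = _")
proof -
  let ?idx = "the_inv_into {..<length xs} (nth xs)"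
  define phi where "phi dl x = (if x \<in> set xs then dl ! ?idx x else 0)" for dl :: "nat list" and x
  have inj: "inj_on (nth xs) {..<length xs}" using dist by (simp add: inj_on_nth)
  have img: "nth xs ` {..<length xs} = set xs" by (auto simp: set_conv_nth)
  have idx: "?idx x < length xs" "xs ! ?idx x = x" if "x \<in> set xs" for x
    using that the_inv_into_into[OF inj] f_the_inv_into_f[OF inj] by (auto simp: img)
  have phi_nth: "phi dl (xs!i) = dl!i" if "i < length xs" for dl i
    using that the_inv_into_f_f[OF inj] by (simp add: phi_def)
  have reindex: "(\<Sum>x\<in>set xs. F x) = (\<Sum>i<length xs. F (xs!i))"
    "(\<Prod>x\<in>set xs. G x) = (\<Prod>i<length xs. G (xs!i))" for F :: "'a \<Rightarrow> 'b::comm_monoid_add" and G :: "'a \<Rightarrow> 'c::comm_monoid_mult"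
    using sum.reindex[OF inj, of F] prod.reindex[OF inj, of G] by (simp_all add: img)
  show ?thesis
  proof (rule sum.reindex_bij_witness[where i="\<lambda>d. map d xs" and j=phi])
    fix dl assume "dl \<in> ?Lists"
    then have dl: "length dl = length xs" "\<forall>i<length xs. 1 \<le> dl!i" "sum_list dl \<le> n"
      using ps by auto
    show "map (phi dl) xs = dl" using dl(1) by (simp add: list_eq_iff_nth_eq phi_nth)
    have "(\<Sum>x\<in>set xs. phi dl x) = sum_list dl"
      using dl(1) by (simp add: reindex phi_nth sum_list_sum_nth atLeast0LessThan)
    moreover have "1 \<le> phi dl x" if "x \<in> set xs" for x
      using dl(2) idx(1)[OF that] that by (simp add: phi_def)
    ultimately show "phi dl \<in> pure_degs_le n (set xs)"
      using dl(3) by (auto simp: pure_degs_le_def phi_def)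
    have coeff: "(\<Prod>x\<in>set xs. binomK a (phi dl x)) = (\<Prod>i<length ps. binomK (plab (ps!i)) (dl!i))"
      by (simp add: reindex phi_nth ps plab_def)
    have maze: "pure_maze (set xs) (phi dl)
        = (\<Sum>i<length ps. replicate_mset (dl!i) (psrc (ps!i), ptgt (ps!i), 1))"
      by (simp add: pure_maze_def reindex phi_nth ps psrc_def ptgt_def)
    show "(\<Prod>x\<in>set xs. binomK a (phi dl x)) * sgl (pure_maze (set xs) (phi dl)) R =
         (if (\<Sum>i<length ps. replicate_mset (dl!i) (psrc (ps!i), ptgt (ps!i), 1)) = R
            then (\<Prod>i<length ps. binomK (plab (ps!i)) (dl!i)) else 0)"
      unfolding coeff maze sgl_def by auto
  next
    fix d assume d: "d \<in> pure_degs_le n (set xs)"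
    show "phi (map d xs) = d"
    proof
      fix x show "phi (map d xs) x = d x"
      proof (cases "x \<in> set xs")
        case True
        then show ?thesis using idx[OF True] by (simp add: phi_def)
      next
        case False
        then show ?thesis using d by (simp add: phi_def pure_degs_le_def)
      qed
    qed
    have "sum_list (map d xs) = (\<Sum>x\<in>set xs. d x)"
      using dist by (simp add: sum_list_distinct_conv_sum_set)
    then show "map d xs \<in> ?Lists"
      using d ps by (auto simp: pure_degs_le_def)
  qed
qed

lemma expand_scaled_identity:
  fixes a :: "'k::comm_ring_1"
  assumes fin: "finite X"
  shows "expand n (lscale a (identity_maze X))
     = (\<lambda>R. \<Sum>d\<in>pure_degs_le n X. (\<Prod>x\<in>X. binomK a (d x)) * sgl (pure_maze X d) R)"
proof -
  let ?M = "lscale a (identity_maze X)"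
  define ps where "ps = (SOME xs. mset xs = ?M)"
  have "mset ps = ?M" unfolding ps_def by (rule someI_ex) (rule ex_mset)
  then have mps: "mset ps = mset_set ((\<lambda>x. (x, x, a)) ` X)"
    by (simp add: lscale_identity_maze[OF fin])
  then have sps: "set ps = (\<lambda>x. (x, x, a)) ` X"
    using fin by (metis finite_imageI finite_set_mset_mset_set set_mset_mset)
  have "count (mset ps) p = (if p \<in> set ps then 1 else 0)" for p
    using mps sps fin by (simp add: count_mset_set')
  then have dps: "distinct ps" by (simp add: distinct_count_atmost_1)
  have "ps ! i = (psrc (ps ! i), psrc (ps ! i), a)" if "i < length ps" for i
    using nth_mem[OF that] sps by (auto simp: psrc_def)
  then have psx: "ps = map (\<lambda>x. (x, x, a)) (map psrc ps)"
    by (simp add: list_eq_iff_nth_eq)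
  have "distinct (map psrc ps)"
    using dps by (subst (asm) psx) (auto simp: distinct_map intro: inj_on_imageI2)
  moreover have "set (map psrc ps) = X"
    using sps by (simp add: image_image psrc_def)
  ultimately show ?thesis
    unfolding expand_def Let_def ps_def[symmetric]
    using sum_degree_lists_eq_sum_pure_degs[OF psx] by simp
qed

lemma fwd_diff_expand_scaled_identity:
  assumes qalg: "\<forall>m::nat. 0 < m \<longrightarrow> (\<exists>y::'k::comm_ring_1. of_nat m * y = 1)"
    and fin: "finite X"
  shows "fwd_diff n (\<lambda>j. expand n (lscale (of_nat j :: 'k) (identity_maze X)) R)
    = of_nat (fact n) * (\<Sum>d\<in>pure_degs n X. natinv (\<Prod>x\<in>X. fact (d x)) * sgl (pure_maze X d) R)"
proof -
  have "fwd_diff n (\<lambda>j. expand n (lscale (of_nat j :: 'k) (identity_maze X)) R)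
      = (\<Sum>d\<in>pure_degs_le n X. fwd_diff n (\<lambda>j. \<Prod>x\<in>X. binomK (of_nat j :: 'k) (d x)) * sgl (pure_maze X d) R)"
    by (simp add: expand_scaled_identity[OF fin] fwd_diff_sum fwd_diff_mult_right)
  also have "\<dots> = (\<Sum>d\<in>pure_degs_le n X. of_nat (fact n) *
      (if (\<Sum>x\<in>X. d x) = n then natinv (\<Prod>x\<in>X. fact (d x)) * sgl (pure_maze X d) R else 0))"
    by (intro sum.cong refl) (simp add: fwd_diff_prod_binomK[OF qalg fin] pure_degs_le_def)
  also have "\<dots> = of_nat (fact n) * (\<Sum>d\<in>pure_degs n X. natinv (\<Prod>x\<in>X. fact (d x)) * sgl (pure_maze X d) R)"
    by (simp add: sum_distrib_left[symmetric] sum.inter_filter finite_pure_degs_le[OF fin] pure_degs_eq_filter)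
  finally show ?thesis .
qed

theorem mainTheorem18:
  fixes n :: nat and X :: "nat set"
  assumes qalg: "\<forall>m::nat. 0 < m \<longrightarrow> (\<exists>y::'k::comm_ring_1. of_nat m * y = 1)"
    and finX: "finite X"
  shows "in_ideal n X X
           (\<lambda>R. (sgl (identity_maze X) :: (nat,'k) comb) R
                - (\<Sum>d\<in>pure_degs n X. natinv (\<Prod>x\<in>X. fact (d x)) * sgl (pure_maze X d) R))"
proof -
  let ?I = "identity_maze X :: (nat,'k) maze"
  define rel :: "nat \<Rightarrow> (nat,'k) comb" where
    "rel j = (\<lambda>R. of_nat j ^ n * sgl ?I R - expand n (lscale (of_nat j) ?I) R)" for j
  let ?S = "\<lambda>R. \<Sum>d\<in>pure_degs n X. natinv (\<Prod>x\<in>X. fact (d x)) * sgl (pure_maze X d) R"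
  have ideal: "in_ideal n X X (\<lambda>R. natinv (fact n) * fwd_diff n rel R)"
    by (intro in_ideal.smul in_ideal_fwd_diff) (simp add: rel_def in_ideal_scaled_identity finX)
  have "\<exists>y::'k. of_nat (fact n) * y = 1" using qalg by simp
  then have "natinv (fact n) * fwd_diff n rel R = sgl ?I R - ?S R" for R
    by (simp add: fwd_diff_apply rel_def fwd_diff_diff fwd_diff_mult_right fwd_diff_power
        fwd_diff_expand_scaled_identity[OF qalg finX] natinv_cancel_left flip: right_diff_distrib)
  with ideal show ?thesis by simp
qed

end
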